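(* Let $p$ be a prime, $q=p^r$, $\mathscr{C}\subseteq\mathbb{F}_q^n$ a linear code over $\mathbb{F}_q$ of dimension $k$ ($1\le k<n$), $m\ge2$, $\mathscr{D}=\{(\lambda,\ldots,\lambda):\lambda\in\mathbb{F}_{q^k}\}\subset\mathbb{F}_{q^k}^m$, $\kappa:\mathbb{F}_{q^k}\to\mathcal{L}(\mathscr{C},\mathbb{F}_p)$ an $\mathbb{F}_p$-linear isomorphism, $f_\lambda=\kappa(\lambda)$, and $Q=\operatorname{span}\{\Phi_\Lambda:\Lambda\in\mathscr{D}\}$, a stabilizer code with minimum distance $\delta$. Then $\delta=\min\{d(\mathscr{C}),m\}$, and the stabilizer group of $Q$ consists exactly of the errors $X(\mathbf{c}_1,\ldots,\mathbf{c}_m)Z(\mathbf{d}_1,\ldots,\mathbf{d}_m)$ with $\mathbf{c}_1,\ldots,\mathbf{c}_m\in\mathscr{C}$, $\sum_{i=1}^m\mathbf{c}_i=0$, and $\mathbf{d}_1,\ldots,\mathbf{d}_m\in\mathscr{C}^\perp$.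
   Context: $\zeta=e^{2\pi i/p}$; $\operatorname{tr}:\mathbb{F}_q\to\mathbb{F}_p$ the trace; $\mathscr{C}^\perp$ the Euclidean dual; $d(\mathscr{C})$ the minimum Hamming distance. $\mathcal{L}(\mathscr{C},\mathbb{F}_p)$ is the space of $\mathbb{F}_p$-linear maps $\mathscr{C}\to\mathbb{F}_p$. $\phi_\lambda=q^{-k/2}\sum_{\mathbf{c}\in\mathscr{C}}\zeta^{f_\lambda(\mathbf{c})}|\mathbf{c}\rangle$, $\Phi_\Lambda=\phi_{\lambda_1}\otimes\cdots\otimes\phi_{\lambda_m}$ in $(\mathbb{C}^q)^{\otimes nm}$ (orthonormal basis $|\mathbf{x}\rangle$, $\mathbf{x}\in\mathbb{F}_q^{nm}$). Errors: $X(a)|x\rangle=|x+a\rangle$, $Z(b)|x\rangle=\zeta^{\operatorname{tr}(bx)}|x\rangle$, tensored to $X(\mathbf{a}),Z(\mathbf{b})$; error group $\mathcal{P}_{nm}=\{\omega^cX(\mathbf{a})Z(\mathbf{b})\}$ with $\omega=\zeta,c\in\mathbb{F}_p$ ($p$ odd) or $\omega=i,c\in\{0,1,2,3\}$ ($p=2$); weight of $\omega^cX(\mathbf{a})Z(\mathbf{b})$ is $\#\{j:(a_j,b_j)\ne(0,0)\}$. The stabilizer group is $\mathcal{S}=\{E\in\mathcal{P}_{nm}:Ev=v\ \forall v\in Q\}$, and $\delta=\min\{\operatorname{wt}(E):E\in C_{\mathcal{P}_{nm}}(\mathcal{S})\setminus\mathcal{S}\mathcal{Z}(\mathcal{P}_{nm})\}$,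 where $\mathcal{Z}(\mathcal{P}_{nm})$ is the set of scalar elements. *)

theory Defs
  imports "HOL-Analysis.Analysis" "HOL-Library.Function_Algebras"
begin

text \<open>Vectors of length N over 'a are functions nat => 'a vanishing from index N on.\<close>
definition vecs :: "nat \<Rightarrow> (nat \<Rightarrow> 'a::zero) set" where
  "vecs N = {v. \<forall>i\<ge>N. v i = 0}"

definition fscale :: "'a::times \<Rightarrow> (nat \<Rightarrow> 'a) \<Rightarrow> nat \<Rightarrow> 'a" where
  "fscale c v = (\<lambda>i. c * v i)"

definition linear_code :: "nat \<Rightarrow> (nat \<Rightarrow> 'a::field) set \<Rightarrow> bool" where
  "linear_code n C \<longleftrightarrow> C \<subseteq> vecs n \<and> module.subspace fscale C"

definition code_dim :: "(nat \<Rightarrow> 'a::field) set \<Rightarrow> nat" where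
  "code_dim C = vector_space.dim fscale C"

definition hamming_wt :: "nat \<Rightarrow> (nat \<Rightarrow> 'a::zero) \<Rightarrow> nat" where
  "hamming_wt N v = card {i. i < N \<and> v i \<noteq> 0}"

definition min_dist :: "nat \<Rightarrow> (nat \<Rightarrow> 'a::zero) set \<Rightarrow> nat" where
  "min_dist n C = Min {hamming_wt n c | c. c \<in> C \<and> c \<noteq> 0}"

definition dual_code :: "nat \<Rightarrow> (nat \<Rightarrow> 'a::field) set \<Rightarrow> (nat \<Rightarrow> 'a) set" where
  "dual_code n C = {v \<in> vecs n. \<forall>c\<in>C. (\<Sum>i<n. v i * c i) = 0}"

text \<open>F_p is represented by {0..<p} (nat) with arithmetic mod p; inside 'a (characteristic p)
  the residue j corresponds to of_nat j.\<close>
definition zeta :: "nat \<Rightarrow> complex" where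
  "zeta p = cis (2 * pi / real p)"

text \<open>Trace F_q -> F_p, q = p^r: x + x^p + ... + x^(p^(r-1)), which lies in the prime field.\<close>
definition ftrace :: "nat \<Rightarrow> nat \<Rightarrow> 'a::field \<Rightarrow> 'a" where
  "ftrace p r x = (\<Sum>i<r. x ^ (p ^ i))"

definition tr :: "nat \<Rightarrow> nat \<Rightarrow> 'a::field \<Rightarrow> nat" where
  "tr p r x = (THE j. j < p \<and> of_nat j = ftrace p r x)"

text \<open>L(C, F_p): F_p-linear maps C -> F_p (extended by 0 outside C).\<close>
definition lin_functionals :: "nat \<Rightarrow> (nat \<Rightarrow> 'a::field) set \<Rightarrow> ((nat \<Rightarrow> 'a) \<Rightarrow> nat) set" where
  "lin_functionals p C = {f. (\<forall>c\<in>C. f c < p)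
      \<and> (\<forall>c\<in>C. \<forall>c'\<in>C. f (\<lambda>i. c i + c' i) = (f c + f c') mod p)
      \<and> (\<forall>a<p. \<forall>c\<in>C. f (fscale (of_nat a) c) = (a * f c) mod p)
      \<and> (\<forall>c. c \<notin> C \<longrightarrow> f c = 0)}"

definition Fp_lin_iso :: "nat \<Rightarrow> (nat \<Rightarrow> 'a::field) set \<Rightarrow> ('b::field \<Rightarrow> (nat \<Rightarrow> 'a) \<Rightarrow> nat) \<Rightarrow> bool" where
  "Fp_lin_iso p C \<kappa> \<longleftrightarrow> bij_betw \<kappa> UNIV (lin_functionals p C)
      \<and> (\<forall>l u. \<forall>c\<in>C. \<kappa> (l + u) c = (\<kappa> l c + \<kappa> u c) mod p)
      \<and> (\<forall>a<p. \<forall>l. \<forall>c\<in>C. \<kappa> (of_nat a * l) c = (a * \<kappa> l c) mod p)"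

text \<open>A state of (C^q)^{tensor N} is a function F_q^N -> complex (coefficients w.r.t. |x>),
  vanishing outside vecs N.\<close>
type_synonym 'a state = "(nat \<Rightarrow> 'a) \<Rightarrow> complex"

definition block :: "nat \<Rightarrow> nat \<Rightarrow> (nat \<Rightarrow> 'a::zero) \<Rightarrow> nat \<Rightarrow> 'a" where
  "block n i x = (\<lambda>j. if j < n then x (i * n + j) else 0)"

definition phi :: "nat \<Rightarrow> nat \<Rightarrow> (nat \<Rightarrow> 'a::{finite,field}) set \<Rightarrow> ('b \<Rightarrow> (nat \<Rightarrow> 'a) \<Rightarrow> nat)
     \<Rightarrow> 'b \<Rightarrow> 'a state" where
  "phi p k C \<kappa> l v = (if v \<in> C then complex_of_real (real CARD('a) powr (- real k / 2)) * zeta p ^ (\<kappa> l v) else 0)"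

text \<open>Phi_Lambda = phi_{Lambda 0} tensor ... tensor phi_{Lambda (m-1)}; block i of x in F_q^{nm}
  is the i-th tensor factor.\<close>
definition Phi :: "nat \<Rightarrow> nat \<Rightarrow> nat \<Rightarrow> nat \<Rightarrow> (nat \<Rightarrow> 'a::{finite,field}) set \<Rightarrow> ('b \<Rightarrow> (nat \<Rightarrow> 'a) \<Rightarrow> nat)
     \<Rightarrow> (nat \<Rightarrow> 'b) \<Rightarrow> 'a state" where
  "Phi p n m k C \<kappa> \<Lambda> x = (if x \<in> vecs (n * m) then (\<Prod>i<m. phi p k C \<kappa> (\<Lambda> i) (block n i x)) else 0)"

definition diag :: "nat \<Rightarrow> (nat \<Rightarrow> 'b::zero) set" where
  "diag m = {\<Lambda>. \<exists>l. \<Lambda> = (\<lambda>i. if i < m then l else 0)}"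

definition cspan :: "'a state set \<Rightarrow> 'a state set" where
  "cspan V = {\<psi>. \<exists>a. \<psi> = (\<lambda>x. \<Sum>v\<in>V. a v * v x)}"

definition code_space :: "nat \<Rightarrow> nat \<Rightarrow> nat \<Rightarrow> nat \<Rightarrow> (nat \<Rightarrow> 'a::{finite,field}) set
     \<Rightarrow> ('b::{finite,field} \<Rightarrow> (nat \<Rightarrow> 'a) \<Rightarrow> nat) \<Rightarrow> 'a state set" where
  "code_space p n m k C \<kappa> = cspan (Phi p n m k C \<kappa> ` diag m)"

text \<open>omega^c I X(a) Z(b): X(a)|x> = |x+a>, Z(b)|x> = prod_j zeta^(tr(b_j x_j)) |x>.
  Coefficient of |y> in w X(a) Z(b) psi is w zeta^(tr(b.(y-a))) psi(y-a).\<close>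
definition err_op :: "nat \<Rightarrow> nat \<Rightarrow> nat \<Rightarrow> complex \<Rightarrow> (nat \<Rightarrow> 'a::field) \<Rightarrow> (nat \<Rightarrow> 'a)
     \<Rightarrow> 'a state \<Rightarrow> 'a state" where
  "err_op p r N w a b \<psi> = (\<lambda>y. if y \<in> vecs N
      then w * (\<Prod>j<N. zeta p ^ tr p r (b j * (y j - a j))) * \<psi> (\<lambda>j. y j - a j) else 0)"

definition omega_pows :: "nat \<Rightarrow> complex set" where
  "omega_pows p = (if p = 2 then {\<i> ^ c | c. c < 4} else {zeta p ^ c | c. c < p})"

definition pauli :: "nat \<Rightarrow> nat \<Rightarrow> nat \<Rightarrow> ('a::field state \<Rightarrow> 'a state) set" where
  "pauli p r N = {err_op p r N w a b | w a b. w \<in> omega_pows p \<and> a \<in> vecs N \<and> b \<in> vecs N}"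

definition err_wt :: "nat \<Rightarrow> nat \<Rightarrow> nat \<Rightarrow> ('a::field state \<Rightarrow> 'a state) \<Rightarrow> nat" where
  "err_wt p r N E = (LEAST t. \<exists>w a b. w \<in> omega_pows p \<and> a \<in> vecs N \<and> b \<in> vecs N
      \<and> E = err_op p r N w a b \<and> t = card {j. j < N \<and> (a j, b j) \<noteq> (0, 0)})"

definition states :: "nat \<Rightarrow> 'a::zero state set" where
  "states N = {\<psi>. \<forall>x. x \<notin> vecs N \<longrightarrow> \<psi> x = 0}"

definition stabilizer_group :: "nat \<Rightarrow> nat \<Rightarrow> nat \<Rightarrow> 'a::field state set \<Rightarrow> ('a state \<Rightarrow> 'a state) set" where
  "stabilizer_group p r N Q = {E \<in> pauli p r N. \<forall>v\<in>Q. E v = v}"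

definition centralizer :: "('a state \<Rightarrow> 'a state) set \<Rightarrow> ('a state \<Rightarrow> 'a state) set \<Rightarrow> ('a state \<Rightarrow> 'a state) set" where
  "centralizer P S = {E \<in> P. \<forall>s\<in>S. E \<circ> s = s \<circ> E}"

definition scalar_elems :: "nat \<Rightarrow> nat \<Rightarrow> nat \<Rightarrow> ('a::field state \<Rightarrow> 'a state) set" where
  "scalar_elems p r N = {E \<in> pauli p r N. \<exists>w. \<forall>\<psi>\<in>states N. E \<psi> = (\<lambda>x. w * \<psi> x)}"

definition qdist :: "nat \<Rightarrow> nat \<Rightarrow> nat \<Rightarrow> 'a::field state set \<Rightarrow> nat" where
  "qdist p r N Q = Min (err_wt p r N `
      (centralizer (pauli p r N) (stabilizer_group p r N Q)
        - {E \<circ> Z | E Z. E \<in> stabilizer_group p r N Q \<and> Z \<in> scalar_elems p r N}))"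

end

(*
  Up to a nonzero constant, Phi_(l,...,l) is the function x |-> zeta^(f_l(x_1 + ... + x_m)) on C^m,
  and it vanishes off C^m. Testing an error w X(a) Z(b) against Phi_(0,...,0), the uniform state on
  C^m, shows that it can fix Q only if a is in C^m, w = 1 and tr(b . x) = 0 for all x in C^m, i.e.
  every block of b lies in the dual code; testing against the other Phi_(l,...,l) then gives
  f_l(a_1 + ... + a_m) = 0 for all l, so a_1 + ... + a_m = 0 because the f_l exhaust the
  F_p-linear functionals on C. Conversely such errors fix every Phi_(l,...,l).

  X(a) Z(b) and X(c) Z(d) commute iff tr(d . a - b . c) = 0, so an error commutes with the
  stabilizer iff a is in C^m and all blocks of b agree modulo the dual code. If such an error is
  not a stabilizer up to a scalar, then either a_1 + ... + a_m <> 0, and some block of a is a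
  nonzero codeword, of weight at least d(C); or some block of b, hence every block of b, lies
  outside the dual code, so all m blocks of b are nonzero. The errors X(c, 0, ..., 0) with c of
  minimum weight and Z(e_j, ..., e_j) with e_j a unit vector outside the dual code attain the
  bounds d(C) and m.
*)

theory Submission
  imports Defs "HOL-Computational_Algebra.Polynomial" "HOL-Computational_Algebra.Primes"
    "HOL-Number_Theory.Cong" "HOL-Algebra.Multiplicative_Group"
begin

section \<open>Roots of unity and finite fields\<close>

lemma zeta_nonzero [simp]: "zeta p \<noteq> 0"
  unfolding zeta_def by (simp add: cis_neq_zero)

lemma zeta_pow_mod: "zeta p ^ (a mod p) = zeta p ^ a"
proof (cases "p = 0")
  case False
  then have "real p * (2 * pi / real p) = 2 * pi" by simp
  then have "zeta p ^ p = 1" by (simp add: zeta_def Complex.DeMoivre)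
  then have "zeta p ^ (p * (a div p) + a mod p) = zeta p ^ (a mod p)"
    by (simp only: power_add power_mult) simp
  then show ?thesis
    by simp
qed simp

lemma zeta_pow_add_mod: "zeta p ^ ((a + b) mod p) = zeta p ^ a * zeta p ^ b"
  by (simp add: zeta_pow_mod power_add)

lemma zeta_pow_eq_1_iff:
  assumes "t < p"
  shows "zeta p ^ t = 1 \<longleftrightarrow> t = 0"
proof
  assume "zeta p ^ t = 1"
  then have "cos (real t * (2 * pi / real p)) = 1"
    unfolding zeta_def Complex.DeMoivre by (metis cis.sel(1) one_complex.sel(1))
  then obtain z :: int where z: "real t * (2 * pi / real p) = real_of_int z * 2 * pi"
    using cos_one_2pi_int by blast
  with assms have "real t / real p = real_of_int z"
    by (simp add: field_simps)
  moreover have "0 \<le> real t / real p" "real t / real p < 1"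
    using assms by auto
  ultimately have "z = 0" by linarith
  with z assms show "t = 0" by simp
qed simp

lemma double_mod_eq_self_imp: "(x::nat) < p \<Longrightarrow> x = (x + x) mod p \<Longrightarrow> x = 0"
  by (cases "x + x < p") (auto simp: le_mod_geq)

lemma omega_pows_nonzero: "w \<in> omega_pows p \<Longrightarrow> w \<noteq> 0"
  unfolding omega_pows_def by (auto split: if_splits)

lemma one_in_omega_pows: "0 < p \<Longrightarrow> 1 \<in> omega_pows p"
  unfolding omega_pows_def by (auto intro!: exI[of _ 0])

lemma power_card_eq_self:
  fixes x :: "'a::{finite,field}"
  shows "x ^ CARD('a) = x"
proof (cases "x = 0")
  case False
  \<comment> \<open>The library's \<open>finite_field_power_card_eq_same\<close> needs the sort \<open>finite_field\<close>;
    here Lagrange's theorem is applied to the multiplicative group instead.\<close>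
  let ?G = "\<lparr>carrier = UNIV - {0}, monoid.mult = (*), one = 1\<rparr> :: 'a monoid"
  have "group ?G"
    by (rule groupI) (auto simp: mult.assoc intro!: bexI[of _ "inverse _"])
  moreover have "x [^]\<^bsub>?G\<^esub> k = x ^ k" for k :: nat
    by (induction k) simp_all
  ultimately have "x ^ card (UNIV - {0 :: 'a}) = 1"
    using group.pow_order_eq_1[of ?G x] False by (simp add: order_def)
  moreover have "CARD('a) = Suc (card (UNIV - {0 :: 'a}))"
    by (simp add: card_Diff_singleton)
  ultimately show ?thesis
    by (metis power_Suc mult_1_right)
qed simp

lemma card_field_ge_2: "2 \<le> CARD('a::{finite,field})"
proof -
  have "card {0, 1 :: 'a} \<le> CARD('a)"
    by (rule card_mono) simp_all
  then show ?thesis by simp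
qed

lemma sum_fun_apply: "sum g A x = (\<Sum>t\<in>A. g t x)"
  by (induction A rule: infinite_finite_induct) auto

definition vdot :: "nat \<Rightarrow> (nat \<Rightarrow> 'a::comm_ring) \<Rightarrow> (nat \<Rightarrow> 'a) \<Rightarrow> 'a" where
  "vdot N v x = (\<Sum>j<N. v j * x j)"

lemma vdot_add_right: "vdot N v (x + y) = vdot N v x + vdot N v y"
  unfolding vdot_def by (simp add: sum.distrib distrib_left)

lemma vdot_diff_right: "vdot N v (x - y) = vdot N v x - vdot N v y"
  unfolding vdot_def by (simp add: sum_subtractf right_diff_distrib)

lemma vdot_zero_right [simp]: "vdot N v 0 = 0"
  unfolding vdot_def by simp

lemma vdot_zero_left [simp]: "vdot N 0 x = 0"
  unfolding vdot_def by simp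

lemma vdot_scale_right: "vdot N v (fscale c x) = c * vdot N v x"
  unfolding vdot_def fscale_def by (simp add: sum_distrib_left mult_ac)

lemma vdot_scale_left: "vdot N (fscale c v) x = c * vdot N v x"
  unfolding vdot_def fscale_def by (simp add: sum_distrib_left mult_ac)

lemma vdot_commute: "vdot N v x = vdot N x v"
  unfolding vdot_def by (simp add: mult.commute)

lemma vecs_add: "(x::nat \<Rightarrow> 'a::ab_group_add) \<in> vecs N \<Longrightarrow> y \<in> vecs N \<Longrightarrow> x + y \<in> vecs N"
  unfolding vecs_def by simp

lemma vecs_diff: "(x::nat \<Rightarrow> 'a::ab_group_add) \<in> vecs N \<Longrightarrow> y \<in> vecs N \<Longrightarrow> x - y \<in> vecs N"
  unfolding vecs_def by simp

lemma zero_in_vecs [simp]: "0 \<in> vecs N"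
  unfolding vecs_def by simp

lemma block_add: "block n i ((x::nat \<Rightarrow> 'a::ab_group_add) + y) = block n i x + block n i y"
  unfolding block_def by auto

lemma block_diff: "block n i ((x::nat \<Rightarrow> 'a::ab_group_add) - y) = block n i x - block n i y"
  unfolding block_def by auto

lemma block_zero [simp]: "block n i (0::nat \<Rightarrow> 'a::zero) = 0"
  unfolding block_def by auto

lemma block_in_vecs: "block n i x \<in> vecs n"
  unfolding block_def vecs_def by auto

lemma block_apply: "t < n \<Longrightarrow> block n i x t = x (i * n + t)"
  unfolding block_def by simp

lemma block_index_less: "(i::nat) < m \<Longrightarrow> t < n \<Longrightarrow> i * n + t < n * m"
proof -
  assume "i < m" "t < n"
  then have "i * n + t < Suc i * n" by simp
  also have "\<dots> \<le> m * n" using \<open>i < m\<close> by (intro mult_le_mono1) simp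
  finally show ?thesis by (simp add: mult.commute)
qed

lemma sum_blocks: "(\<Sum>j<n * m. (g::nat \<Rightarrow> 'a::comm_monoid_add) j) = (\<Sum>i<m. \<Sum>t<n. g (i * n + t))"
proof -
  have "(\<Sum>j<n * m. g j) = (\<Sum>i<m. sum g {i * n..<i * n + n})"
    using sum.nat_group[of g n m] by (simp add: mult.commute)
  also have "\<dots> = (\<Sum>i<m. \<Sum>t<n. g (i * n + t))"
  proof (rule sum.cong[OF refl])
    fix i
    show "sum g {i * n..<i * n + n} = (\<Sum>t<n. g (i * n + t))"
      by (rule sum.reindex_bij_witness[of _ "\<lambda>t. i * n + t" "\<lambda>j. j - i * n"]) auto
  qed
  finally show ?thesis .
qed

lemma vdot_blocks: "vdot (n * m) v x = (\<Sum>i<m. vdot n (block n i v) (block n i x))"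
  unfolding vdot_def sum_blocks block_def by simp

definition embed_block :: "nat \<Rightarrow> nat \<Rightarrow> (nat \<Rightarrow> 'a::zero) \<Rightarrow> nat \<Rightarrow> 'a" where
  "embed_block n i u = (\<lambda>j. if i * n \<le> j \<and> j < i * n + n then u (j - i * n) else 0)"

lemma block_embed_block:
  assumes "u \<in> vecs n"
  shows "block n i' (embed_block n i u) = (if i' = i then u else 0)"
proof -
  have "i' = i" if "t < n" "i * n \<le> i' * n + t" "i' * n + t < i * n + n" for t
  proof -
    have "(i' * n + t) div n = i" using that by (intro div_nat_eqI) (simp_all add: mult.commute)
    then show ?thesis using that by simp
  qed
  with assms show ?thesis
    unfolding block_def embed_block_def vecs_def by (auto simp: fun_eq_iff)
qed

lemma embed_block_in_vecs: "i < m \<Longrightarrow> embed_block n i u \<in> vecs (n * m)"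
proof -
  assume "i < m"
  then have "i * n + n \<le> n * m"
    using mult_le_mono1[of "Suc i" m n] by (simp add: mult.commute)
  then show ?thesis
    unfolding embed_block_def vecs_def by auto
qed

lemma vdot_embed_block_right:
  "u \<in> vecs n \<Longrightarrow> i < m \<Longrightarrow> vdot (n * m) v (embed_block n i u) = vdot n (block n i v) u"
  unfolding vdot_blocks by (simp add: block_embed_block if_distrib[of "vdot n _"] cong: if_cong)

lemma vdot_embed_block_left:
  "u \<in> vecs n \<Longrightarrow> i < m \<Longrightarrow> vdot (n * m) (embed_block n i u) x = vdot n u (block n i x)"
  using vdot_embed_block_right[of u n i m x] by (simp add: vdot_commute)

definition repeat_block :: "nat \<Rightarrow> nat \<Rightarrow> (nat \<Rightarrow> 'a::zero) \<Rightarrow> nat \<Rightarrow> 'a" where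
  "repeat_block n m u = (\<lambda>j. if j < n * m then u (j mod n) else 0)"

lemma repeat_block_in_vecs: "repeat_block n m u \<in> vecs (n * m)"
  unfolding repeat_block_def vecs_def by simp

lemma block_repeat_block: "u \<in> vecs n \<Longrightarrow> i < m \<Longrightarrow> block n i (repeat_block n m u) = u"
  unfolding repeat_block_def block_def vecs_def using block_index_less[of i m _ n]
  by (auto simp: fun_eq_iff)

definition unit_vec :: "nat \<Rightarrow> nat \<Rightarrow> 'a::zero_neq_one" where
  "unit_vec j = (\<lambda>t. if t = j then 1 else 0)"

lemma unit_vec_in_vecs: "j < n \<Longrightarrow> unit_vec j \<in> vecs n"
  unfolding unit_vec_def vecs_def by simp

lemma hamming_wt_unit_vec: "j < n \<Longrightarrow> hamming_wt n (unit_vec j) = 1"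
  unfolding hamming_wt_def unit_vec_def by (simp add: conj_commute)

lemma vdot_unit_vec_left: "j < n \<Longrightarrow> vdot n (unit_vec j) x = (x j :: 'a::comm_ring_1)"
  unfolding vdot_def unit_vec_def by (simp add: if_distrib[of "\<lambda>c. c * _"] cong: if_cong)

section \<open>Linear codes\<close>

interpretation fscale_space: Vector_Spaces.vector_space "fscale :: 'a::field \<Rightarrow> (nat \<Rightarrow> 'a) \<Rightarrow> nat \<Rightarrow> 'a"
  by unfold_locales (simp_all add: fscale_def fun_eq_iff algebra_simps)

interpretation fscale_space_pair: vector_space_pair "fscale :: 'a::field \<Rightarrow> (nat \<Rightarrow> 'a) \<Rightarrow> nat \<Rightarrow> 'a"
  "(*) :: 'a \<Rightarrow> 'a \<Rightarrow> 'a"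
  by unfold_locales (simp_all add: fscale_def fun_eq_iff algebra_simps)

lemma linear_code_subspace: "linear_code n C \<Longrightarrow> fscale_space.subspace C"
  unfolding linear_code_def by blast

lemma linear_code_subset_vecs: "linear_code n C \<Longrightarrow> C \<subseteq> vecs n"
  unfolding linear_code_def by blast

lemma dual_code_iff: "d \<in> dual_code n C \<longleftrightarrow> d \<in> vecs n \<and> (\<forall>c\<in>C. vdot n d c = 0)"
  unfolding dual_code_def vdot_def by blast

lemma dual_code_scale: "d \<in> dual_code n C \<Longrightarrow> fscale \<beta> d \<in> dual_code n C"
  unfolding dual_code_def fscale_def vecs_def
  by (auto simp: sum_distrib_left[symmetric] mult.assoc)

lemma zero_in_dual_code [simp]: "0 \<in> dual_code n C"
  unfolding dual_code_def vecs_def by simp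

lemma linear_functional_eq_vdot:
  fixes f :: "(nat \<Rightarrow> 'a::field) \<Rightarrow> 'a"
  assumes lin: "Vector_Spaces.linear fscale (*) f"
  shows "\<exists>d\<in>vecs n. \<forall>x\<in>vecs n. f x = vdot n d x"
proof
  define d where "d = (\<lambda>t. if t < n then f (unit_vec t) else 0)"
  show "d \<in> vecs n"
    unfolding vecs_def d_def by simp
  show "\<forall>x\<in>vecs n. f x = vdot n d x"
  proof
    fix x :: "nat \<Rightarrow> 'a" assume x: "x \<in> vecs n"
    have "x = (\<Sum>t<n. fscale (x t) (unit_vec t))"
      using x unfolding vecs_def fscale_def unit_vec_def sum_fun_apply fun_eq_iff
      by (auto simp: if_distrib cong: if_cong)
    then have "f x = f (\<Sum>t<n. fscale (x t) (unit_vec t))"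
      by simp
    also have "\<dots> = (\<Sum>t<n. x t * f (unit_vec t))"
      by (simp add: fscale_space_pair.linear_sum[OF lin] fscale_space_pair.linear_scale[OF lin])
    finally show "f x = vdot n d x"
      unfolding vdot_def d_def by (simp add: mult.commute)
  qed
qed

lemma mem_code_if_orthogonal_to_dual:
  assumes C: "linear_code n C" and v: "v \<in> vecs n"
    and orth: "\<And>d. d \<in> dual_code n C \<Longrightarrow> vdot n d v = 0"
  shows "v \<in> C"
proof (rule ccontr)
  assume vC: "v \<notin> C"
  obtain B where B: "B \<subseteq> C" "fscale_space.independent B" "C \<subseteq> fscale_space.span B"
    using fscale_space.maximal_independent_subset[of C] by blast
  have "v \<notin> fscale_space.span B"
    using vC fscale_space.span_minimal[OF B(1) linear_code_subspace[OF C]] by blast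
  then have ind: "fscale_space.independent (insert v B)"
    using fscale_space.independent_insertI B(2) by blast
  define f where "f = fscale_space_pair.construct (insert v B) (\<lambda>x. if x = v then (1::'a) else 0)"
  have lin: "Vector_Spaces.linear fscale (*) f"
    unfolding f_def by (rule fscale_space_pair.linear_construct[OF ind])
  have fv: "f v = 1"
    unfolding f_def by (subst fscale_space_pair.construct_basis[OF ind]) auto
  have "f b = 0" if "b \<in> B" for b
    unfolding f_def using that vC B(1) by (subst fscale_space_pair.construct_basis[OF ind]) auto
  then have fC: "f c = 0" if "c \<in> C" for c
    using fscale_space_pair.linear_eq_0_on_span[OF lin] B(3) that by blast
  obtain d where d: "d \<in> vecs n" "\<And>x. x \<in> vecs n \<Longrightarrow> f x = vdot n d x"
    using linear_functional_eq_vdot[OF lin] by blast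
  have "d \<in> dual_code n C"
    unfolding dual_code_iff using d fC linear_code_subset_vecs[OF C] by (metis subsetD)
  then show False
    using orth d(2)[OF v] fv by simp
qed

lemma hamming_wt_le: "hamming_wt n c \<le> n"
  unfolding hamming_wt_def by (rule order_trans[OF card_mono[of "{..<n}"]]) auto

lemma finite_code_weights: "finite {hamming_wt n c | c. c \<in> C \<and> c \<noteq> 0}"
  by (rule finite_subset[of _ "{..n}"]) (auto simp: hamming_wt_le)

lemma min_dist_le: "c \<in> C \<Longrightarrow> c \<noteq> 0 \<Longrightarrow> min_dist n C \<le> hamming_wt n c"
  unfolding min_dist_def by (rule Min_le[OF finite_code_weights]) blast

lemma min_dist_attained:
  assumes "c \<in> C" "c \<noteq> 0"
  obtains c' where "c' \<in> C" "c' \<noteq> 0" "hamming_wt n c' = min_dist n C"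
proof -
  have "min_dist n C \<in> {hamming_wt n c | c. c \<in> C \<and> c \<noteq> 0}"
    unfolding min_dist_def by (rule Min_in[OF finite_code_weights]) (use assms in blast)
  then show ?thesis using that by force
qed

lemma code_nonzero_if_dim_pos:
  assumes "0 < code_dim C"
  shows "C \<noteq> {0}"
proof
  assume "C = {0}"
  then have "code_dim C = 0"
    unfolding code_dim_def
    using fscale_space.dim_eq_card[of "{}" "{0}"] fscale_space.independent_empty fscale_space.span_insert_0[of "{}"] by simp
  with assms show False by simp
qed

definition xz_weight :: "nat \<Rightarrow> (nat \<Rightarrow> 'a::zero) \<Rightarrow> (nat \<Rightarrow> 'a) \<Rightarrow> nat" where
  "xz_weight N a b = card {j. j < N \<and> (a j, b j) \<noteq> (0, 0)}"

lemma xz_weight_le: "xz_weight N a b \<le> N"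
  unfolding xz_weight_def by (rule order_trans[OF card_mono[of "{..<N}"]]) auto

lemma err_wt_le:
  "w \<in> omega_pows p \<Longrightarrow> a \<in> vecs N \<Longrightarrow> b \<in> vecs N
    \<Longrightarrow> err_wt p r N (err_op p r N w a b) \<le> xz_weight N a b"
  unfolding err_wt_def xz_weight_def by (rule Least_le) blast

lemma err_wt_attained:
  assumes "E \<in> pauli p r N"
  obtains w a b where "w \<in> omega_pows p" "a \<in> vecs N" "b \<in> vecs N"
    "E = err_op p r N w a b" "err_wt p r N E = xz_weight N a b"
proof -
  let ?P = "\<lambda>t. \<exists>w a b. w \<in> omega_pows p \<and> a \<in> vecs N \<and> b \<in> vecs N
      \<and> E = err_op p r N w a b \<and> t = card {j. j < N \<and> (a j, b j) \<noteq> (0, 0)}"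
  from assms have "\<exists>t. ?P t"
    unfolding pauli_def by blast
  then have "?P (Least ?P)"
    by (rule LeastI_ex)
  then show ?thesis
    using that unfolding err_wt_def xz_weight_def by blast
qed

lemma err_wt_le_length: "E \<in> pauli p r N \<Longrightarrow> err_wt p r N E \<le> N"
  by (metis err_wt_attained xz_weight_le)

lemma finite_err_wt_image: "A \<subseteq> pauli p r N \<Longrightarrow> finite (err_wt p r N ` A)"
  by (rule finite_subset[of _ "{..N}"]) (auto dest: err_wt_le_length)

lemma hamming_wt_block_le_xz_weight:
  assumes "i < m"
  shows "hamming_wt n (block n i a) \<le> xz_weight (n * m) a b"
proof -
  have "hamming_wt n (block n i a) = card ((\<lambda>t. i * n + t) ` {t. t < n \<and> block n i a t \<noteq> 0})"
    unfolding hamming_wt_def by (rule card_image[symmetric]) (auto intro: inj_onI)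
  also have "\<dots> \<le> xz_weight (n * m) a b"
    unfolding xz_weight_def
    by (rule card_mono) (use assms block_index_less in \<open>auto simp: block_apply\<close>)
  finally show ?thesis .
qed

lemma xz_weight_ge_if_blocks_nonzero:
  assumes "\<And>i. i < m \<Longrightarrow> block n i b \<noteq> 0"
  shows "m \<le> xz_weight (n * m) a b"
proof -
  have "\<exists>t<n. b (i * n + t) \<noteq> 0" if "i < m" for i
    using assms[OF that] by (auto simp: block_def fun_eq_iff split: if_splits)
  then obtain t where t: "\<And>i. i < m \<Longrightarrow> t i < n \<and> b (i * n + t i) \<noteq> 0"
    by metis
  have "inj_on (\<lambda>i. i * n + t i) {..<m}"
  proof (rule inj_onI)
    fix i i' assume "i \<in> {..<m}" "i' \<in> {..<m}" "i * n + t i = i' * n + t i'"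
    moreover have "t i < n" "t i' < n"
      using t \<open>i \<in> {..<m}\<close> \<open>i' \<in> {..<m}\<close> by auto
    ultimately show "i = i'"
      by (metis add_mult_distrib div_mult_self1 less_nat_zero_code div_less add_0 add.commute)
  qed
  then have "m = card ((\<lambda>i. i * n + t i) ` {..<m})"
    by (simp add: card_image)
  also have "\<dots> \<le> xz_weight (n * m) a b"
    unfolding xz_weight_def by (rule card_mono) (use t block_index_less in auto)
  finally show ?thesis .
qed

lemma xz_weight_embed_block_le:
  "xz_weight (n * m) (embed_block n i u) 0 \<le> hamming_wt n u"
proof -
  have "{j. j < n * m \<and> (embed_block n i u j, 0 j) \<noteq> (0, 0)}
      \<subseteq> (\<lambda>t. i * n + t) ` {t. t < n \<and> u t \<noteq> 0}"
    unfolding embed_block_def by (auto intro!: image_eqI[of _ _ "_ - i * n"])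
  then have "xz_weight (n * m) (embed_block n i u) 0 \<le> card ((\<lambda>t. i * n + t) ` {t. t < n \<and> u t \<noteq> 0})"
    unfolding xz_weight_def by (rule card_mono[rotated]) auto
  also have "\<dots> \<le> hamming_wt n u"
    unfolding hamming_wt_def by (rule card_image_le) simp
  finally show ?thesis .
qed

lemma xz_weight_repeat_block_le:
  "xz_weight (n * m) 0 (repeat_block n m u) \<le> m * hamming_wt n u"
proof -
  have "xz_weight (n * m) 0 (repeat_block n m u) = card {j. j < n * m \<and> repeat_block n m u j \<noteq> 0}"
    unfolding xz_weight_def by simp
  also have "\<dots> \<le> card ((\<lambda>(i, t). i * n + t) ` ({..<m} \<times> {t. t < n \<and> u t \<noteq> 0}))"
  proof (rule card_mono, simp, rule subsetI)
    fix j assume "j \<in> {j. j < n * m \<and> repeat_block n m u j \<noteq> 0}"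
    then have j: "j < n * m" "u (j mod n) \<noteq> 0"
      by (auto simp: repeat_block_def split: if_splits)
    then have "j div n < m" "j mod n < n"
      by (simp_all add: less_mult_imp_div_less mult.commute) (cases "n = 0"; simp)
    with j show "j \<in> (\<lambda>(i, t). i * n + t) ` ({..<m} \<times> {t. t < n \<and> u t \<noteq> 0})"
      by (intro image_eqI[of _ _ "(j div n, j mod n)"]) auto
  qed
  also have "\<dots> \<le> m * hamming_wt n u"
    unfolding hamming_wt_def by (rule order_trans[OF card_image_le]) (simp_all add: card_cartesian_product)
  finally show ?thesis .
qed

section \<open>The trace and the Pauli errors\<close>

locale prime_power_field =
  fixes p r :: nat and field :: "'a::{finite,field} itself"
  assumes prime_p: "prime p" and card_field: "CARD('a) = p ^ r"
begin

lemma p_gt_1: "1 < p"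
  using prime_p prime_gt_1_nat by blast

lemma omega_pows_one: "1 \<in> omega_pows p"
  using one_in_omega_pows p_gt_1 by simp

lemma r_pos: "0 < r"
  using card_field card_field_ge_2[where 'a='a] by (cases r) auto

lemma CHAR_eq: "CHAR('a) = p"
proof -
  have prime_char: "prime CHAR('a)"
    by (rule prime_CHAR_semidom) (simp add: finite_imp_CHAR_pos)
  have "(\<Sum>y\<in>(UNIV::'a set). y + 1) = (\<Sum>y\<in>UNIV. y)"
    by (rule sum.reindex_bij_witness[of _ "\<lambda>y. y - 1" "\<lambda>y. y + 1"]) auto
  then have "(of_nat CARD('a) :: 'a) = 0"
    by (simp add: sum.distrib)
  then have "CHAR('a) dvd p ^ r"
    unfolding card_field of_nat_eq_0_iff_char_dvd .
  then have "CHAR('a) dvd p"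
    using prime_char prime_dvd_power by blast
  then show ?thesis
    using prime_char prime_p primes_dvd_imp_eq by blast
qed

lemma of_nat_eq_iff_mod: "(of_nat x :: 'a) = of_nat y \<longleftrightarrow> x mod p = y mod p"
  using of_nat_eq_iff_cong_CHAR[of x y, where 'a='a] CHAR_eq unfolding cong_def by simp

lemma of_nat_eq_imp_eq: "x < p \<Longrightarrow> y < p \<Longrightarrow> (of_nat x :: 'a) = of_nat y \<Longrightarrow> x = y"
  using of_nat_eq_iff_mod by simp

lemma of_nat_mod [simp]: "(of_nat (x mod p) :: 'a) = of_nat x"
  using of_nat_eq_iff_mod by simp

lemma frobenius_add: "((x::'a) + y) ^ (p ^ i) = x ^ (p ^ i) + y ^ (p ^ i)"
  by (rule freshmans_dream') (simp_all add: CHAR_eq prime_p)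

lemma of_nat_power_p: "(of_nat j :: 'a) ^ p = of_nat j"
proof (induction j)
  case (Suc j)
  then show ?case
    using frobenius_add[of 1 "of_nat j" 1] by simp
qed (use p_gt_1 in simp)

lemma power_p_eq_self_imp:
  assumes "(y::'a) ^ p = y"
  shows "\<exists>j<p. y = of_nat j"
proof -
  define P :: "'a poly" where "P = Polynomial.monom 1 p - [:0, 1:]"
  have poly_P: "poly P z = z ^ p - z" for z
    by (simp add: P_def poly_monom)
  have "Polynomial.coeff P p = 1"
    using p_gt_1 by (simp add: P_def coeff_monom coeff_pCons split: nat.split)
  then have "P \<noteq> 0" by auto
  moreover have "degree P \<le> p"
    unfolding P_def using p_gt_1
    by (intro degree_le) (auto simp: coeff_monom coeff_pCons split: nat.splits)
  ultimately have card_roots: "card {z. poly P z = 0} \<le> p"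
    using card_poly_roots_bound by fastforce
  have "inj_on (of_nat :: nat \<Rightarrow> 'a) {..<p}"
    by (auto intro!: inj_onI of_nat_eq_imp_eq)
  then have "card (of_nat ` {..<p} :: 'a set) = p"
    by (simp add: card_image)
  moreover have "(of_nat ` {..<p} :: 'a set) \<subseteq> {z. poly P z = 0}"
    using of_nat_power_p by (auto simp: poly_P)
  ultimately have "(of_nat ` {..<p} :: 'a set) = {z. poly P z = 0}"
    using card_roots by (intro card_seteq) auto
  then show ?thesis
    using assms by (auto simp: poly_P)
qed

lemma ftrace_add: "ftrace p r ((x::'a) + y) = ftrace p r x + ftrace p r y"
  unfolding ftrace_def by (simp add: frobenius_add sum.distrib)

lemma ftrace_zero [simp]: "ftrace p r (0::'a) = 0"
  unfolding ftrace_def using p_gt_1 by (simp add: zero_power)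

lemma ftrace_of_nat_mult: "ftrace p r (of_nat a * (x::'a)) = of_nat a * ftrace p r x"
  by (induction a) (simp_all add: distrib_right ftrace_add)

lemma ftrace_power_p: "ftrace p r (x::'a) ^ p = ftrace p r x"
proof -
  obtain r' where r: "r = Suc r'"
    using r_pos by (cases r) auto
  have "ftrace p r x ^ p = (\<Sum>i<r. (x ^ (p ^ i)) ^ p)"
    unfolding ftrace_def by (rule freshmans_dream_sum) (simp_all add: CHAR_eq prime_p)
  also have "\<dots> = (\<Sum>i<r. x ^ (p ^ Suc i))"
    by (simp add: power_mult[symmetric] mult.commute)
  also have "\<dots> = (\<Sum>i<r'. x ^ (p ^ Suc i)) + x ^ CARD('a)"
    by (simp add: r card_field)
  also have "\<dots> = ftrace p r x"
    unfolding ftrace_def r power_card_eq_self by (subst sum.lessThan_Suc_shift) simp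
  finally show ?thesis .
qed

lemma tr_less: "tr p r (x::'a) < p"
  and of_nat_tr: "(of_nat (tr p r x) :: 'a) = ftrace p r x"
proof -
  obtain j where j: "j < p" "ftrace p r x = of_nat j"
    using power_p_eq_self_imp[OF ftrace_power_p] by blast
  have "tr p r x = j"
    unfolding tr_def by (rule the1_equality) (use j of_nat_eq_imp_eq in auto)
  with j show "tr p r x < p" "of_nat (tr p r x) = ftrace p r x"
    by simp_all
qed

lemma tr_eq_iff: "tr p r (x::'a) = t \<longleftrightarrow> t < p \<and> of_nat t = ftrace p r x"
proof
  assume "t < p \<and> of_nat t = ftrace p r x"
  then show "tr p r x = t"
    using of_nat_eq_imp_eq[of "tr p r x" t] tr_less[of x] of_nat_tr[of x] by simp
qed (use tr_less of_nat_tr in auto)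

lemma tr_add: "tr p r ((x::'a) + y) = (tr p r x + tr p r y) mod p"
  unfolding tr_eq_iff using p_gt_1 by (simp add: of_nat_tr ftrace_add)

lemma tr_eq_0_iff: "tr p r (x::'a) = 0 \<longleftrightarrow> ftrace p r x = 0"
  unfolding tr_eq_iff using p_gt_1 by auto

lemma tr_of_nat_mult: "tr p r (of_nat a * (x::'a)) = (a * tr p r x) mod p"
  unfolding tr_eq_iff using p_gt_1 by (simp add: of_nat_tr ftrace_of_nat_mult)

lemma ex_ftrace_nonzero: "\<exists>x::'a. ftrace p r x \<noteq> 0"
proof (rule ccontr)
  assume "\<not> ?thesis"
  define P :: "'a poly" where "P = (\<Sum>i<r. Polynomial.monom 1 (p ^ i))"
  have "poly P z = ftrace p r z" for z
    by (simp add: P_def poly_sum poly_monom ftrace_def)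
  with \<open>\<not> ?thesis\<close> have roots: "{z. poly P z = 0} = UNIV"
    by auto
  have coeff_P: "Polynomial.coeff P j = (\<Sum>i<r. if p ^ i = j then 1 else 0)" for j
    by (simp add: P_def coeff_sum coeff_monom)
  have power_inj: "p ^ i = p ^ j \<longleftrightarrow> i = j" for i j
    using p_gt_1 by (simp add: power_inject_exp)
  have "Polynomial.coeff P (p ^ (r - 1)) = 1"
    unfolding coeff_P power_inj using r_pos by (simp add: sum.delta)
  then have "P \<noteq> 0" by auto
  moreover have "degree P \<le> p ^ (r - 1)"
  proof (rule degree_le, intro allI impI)
    fix j assume j: "p ^ (r - 1) < j"
    have "p ^ i \<noteq> j" if "i < r" for i
    proof -
      have "p ^ i \<le> p ^ (r - 1)"
        using that p_gt_1 by (intro power_increasing) auto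
      with j show ?thesis by simp
    qed
    then show "Polynomial.coeff P j = 0"
      unfolding coeff_P by simp
  qed
  ultimately have "CARD('a) \<le> p ^ (r - 1)"
    using card_poly_roots_bound[of P] roots by simp
  moreover have "p ^ (r - 1) < p ^ r"
    using p_gt_1 r_pos by (intro power_strict_increasing) auto
  ultimately show False
    using card_field by simp
qed

lemma ftrace_nondegenerate:
  assumes "\<And>\<beta>::'a. ftrace p r (\<beta> * s) = 0"
  shows "s = 0"
proof (rule ccontr)
  assume "s \<noteq> 0"
  obtain x :: 'a where "ftrace p r x \<noteq> 0"
    using ex_ftrace_nonzero by blast
  moreover have "ftrace p r ((x / s) * s) = 0"
    by (rule assms)
  ultimately show False
    using \<open>s \<noteq> 0\<close> by simp
qed

definition trace_char :: "'a \<Rightarrow> complex" where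
  "trace_char x = zeta p ^ tr p r x"

lemma trace_char_add: "trace_char (x + y) = trace_char x * trace_char y"
  unfolding trace_char_def tr_add by (rule zeta_pow_add_mod)

lemma trace_char_zero [simp]: "trace_char 0 = 1"
  unfolding trace_char_def using tr_eq_0_iff[of 0] by simp

lemma trace_char_nonzero [simp]: "trace_char x \<noteq> 0"
  unfolding trace_char_def by simp

lemma trace_char_eq_1_iff: "trace_char x = 1 \<longleftrightarrow> ftrace p r x = 0"
  unfolding trace_char_def zeta_pow_eq_1_iff[OF tr_less] tr_eq_0_iff ..

lemma prod_trace_char: "(\<Prod>j\<in>A. trace_char (f j)) = trace_char (\<Sum>j\<in>A. f j)"
  by (induction A rule: infinite_finite_induct) (simp_all add: trace_char_add)

lemma ex_lin_functional_nonzero: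
  assumes C: "linear_code n (C :: (nat \<Rightarrow> 'a) set)" and s: "s \<in> C" "s \<noteq> 0"
  shows "\<exists>f\<in>lin_functionals p C. f s \<noteq> 0"
proof -
  obtain j where j: "s j \<noteq> 0"
    using s(2) by (auto simp: fun_eq_iff)
  obtain x :: 'a where x: "ftrace p r x \<noteq> 0"
    using ex_ftrace_nonzero by blast
  define f where "f = (\<lambda>c. if c \<in> C then tr p r (x / s j * c j) else 0)"
  have "f \<in> lin_functionals p C"
    unfolding lin_functionals_def
  proof (intro CollectI conjI ballI allI impI)
    fix c c' assume "c \<in> C" "c' \<in> C"
    then have "(\<lambda>i. c i + c' i) \<in> C"
      using fscale_space.subspace_add[OF linear_code_subspace[OF C]] by (simp add: plus_fun_def)
    with \<open>c \<in> C\<close> \<open>c' \<in> C\<close> show "f (\<lambda>i. c i + c' i) = (f c + f c') mod p"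
      unfolding f_def by (simp add: distrib_left tr_add)
  next
    fix a c assume "a < p" "c \<in> C"
    then have "fscale (of_nat a) c \<in> C"
      using fscale_space.subspace_scale[OF linear_code_subspace[OF C]] by blast
    with \<open>c \<in> C\<close> show "f (fscale (of_nat a) c) = (a * f c) mod p"
      unfolding f_def by (simp add: fscale_def tr_of_nat_mult[symmetric] mult.left_commute)
  qed (simp_all add: f_def tr_less)
  moreover have "f s \<noteq> 0"
    unfolding f_def using s j x by (simp add: tr_eq_0_iff)
  ultimately show ?thesis by blast
qed

lemma err_op_apply:
  fixes a b :: "nat \<Rightarrow> 'a"
  shows "y \<in> vecs N \<Longrightarrow> err_op p r N w a b \<psi> y = w * trace_char (vdot N b (y - a)) * \<psi> (y - a)"
  unfolding err_op_def vdot_def trace_char_def[symmetric] prod_trace_char by (simp add: fun_diff_def)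

lemma err_op_outside:
  fixes a b :: "nat \<Rightarrow> 'a"
  shows "y \<notin> vecs N \<Longrightarrow> err_op p r N w a b \<psi> y = 0"
  unfolding err_op_def by simp

lemma err_op_commutation:
  fixes a b c d :: "nat \<Rightarrow> 'a"
  assumes "a \<in> vecs N" "c \<in> vecs N"
  shows "(err_op p r N w' c d \<circ> err_op p r N w a b) \<psi> y
    = trace_char (vdot N d a - vdot N b c) * (err_op p r N w a b \<circ> err_op p r N w' c d) \<psi> y"
proof (cases "y \<in> vecs N")
  case True
  then have "y - c \<in> vecs N" "y - a \<in> vecs N"
    using assms vecs_diff by blast+
  moreover have "y - a - c = y - c - a"
    by (simp add: algebra_simps)
  moreover have "vdot N d (y - c) + vdot N b (y - c - a)
      = (vdot N d a - vdot N b c) + (vdot N b (y - a) + vdot N d (y - a - c))"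
    by (simp add: vdot_diff_right vdot_add_right algebra_simps)
  ultimately show ?thesis
    using True by (simp add: err_op_apply trace_char_add[symmetric] mult_ac diff_diff_eq add.commute)
qed (simp add: err_op_outside)

lemma err_op_commute_iff:
  fixes a b c d :: "nat \<Rightarrow> 'a"
  assumes "a \<in> vecs N" "c \<in> vecs N" "w \<noteq> 0" "w' \<noteq> 0"
  shows "err_op p r N w a b \<circ> err_op p r N w' c d = err_op p r N w' c d \<circ> err_op p r N w a b
    \<longleftrightarrow> ftrace p r (vdot N d a - vdot N b c) = 0"
    (is "?E2 \<circ> ?E1 = ?E1 \<circ> ?E2 \<longleftrightarrow> _")
proof
  assume "?E2 \<circ> ?E1 = ?E1 \<circ> ?E2"
  then have commute: "?E1 \<circ> ?E2 = ?E2 \<circ> ?E1" ..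
  have "(?E2 \<circ> ?E1) (\<lambda>_. 1) 0 \<noteq> 0"
    using assms vecs_diff[of 0 N a] by (simp add: err_op_apply)
  with commute err_op_commutation[OF assms(1,2), of w' d w b "\<lambda>_. 1" 0]
  have "trace_char (vdot N d a - vdot N b c) = 1"
    by simp
  then show "ftrace p r (vdot N d a - vdot N b c) = 0"
    by (simp add: trace_char_eq_1_iff)
next
  assume "ftrace p r (vdot N d a - vdot N b c) = 0"
  then have "trace_char (vdot N d a - vdot N b c) = 1"
    by (simp add: trace_char_eq_1_iff)
  then show "?E2 \<circ> ?E1 = ?E1 \<circ> ?E2"
    using err_op_commutation[OF assms(1,2)] by (intro ext) simp
qed

lemma err_op_lincomb:
  fixes a b :: "nat \<Rightarrow> 'a"
  shows "err_op p r N w a b (\<lambda>x. \<Sum>v\<in>G. \<alpha> v * v x) y = (\<Sum>v\<in>G. \<alpha> v * err_op p r N w a b v y)"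
  by (cases "y \<in> vecs N") (simp_all add: err_op_apply err_op_outside sum_distrib_left mult_ac)

lemma err_op_mult:
  fixes a b :: "nat \<Rightarrow> 'a"
  shows "err_op p r N w a b (\<lambda>x. u * \<psi> x) = (\<lambda>y. u * err_op p r N w a b \<psi> y)"
  unfolding err_op_def by (simp add: fun_eq_iff mult_ac)

lemma err_op_scalar:
  fixes \<psi> :: "'a state"
  assumes "\<psi> \<in> states N"
  shows "err_op p r N w 0 0 \<psi> = (\<lambda>y. w * \<psi> y)"
proof
  fix y
  show "err_op p r N w 0 0 \<psi> y = w * \<psi> y"
    using assms unfolding states_def by (cases "y \<in> vecs N") (simp_all add: err_op_apply err_op_outside)
qed

lemma err_op_scalar_in_scalar_elems:
  "w \<in> omega_pows p \<Longrightarrow> err_op p r N w (0 :: nat \<Rightarrow> 'a) 0 \<in> scalar_elems p r N"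
  unfolding scalar_elems_def pauli_def using err_op_scalar zero_in_vecs by blast

lemma err_op_comp_scalar:
  fixes a b :: "nat \<Rightarrow> 'a"
  assumes "a \<in> vecs N"
  shows "err_op p r N 1 a b \<circ> err_op p r N w 0 0 = err_op p r N w a b"
proof (intro ext)
  fix \<psi> y
  show "(err_op p r N 1 a b \<circ> err_op p r N w 0 0) \<psi> y = err_op p r N w a b \<psi> y"
    using assms vecs_diff[of y N a] by (cases "y \<in> vecs N") (simp_all add: err_op_apply err_op_outside)
qed

end

section \<open>The code on the diagonal\<close>

locale diagonal_code = prime_power_field p r "TYPE('a::{finite,field})" for p r +
  fixes C :: "(nat \<Rightarrow> 'a::{finite,field}) set"
    and \<kappa> :: "'b::{finite,field} \<Rightarrow> (nat \<Rightarrow> 'a) \<Rightarrow> nat"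
    and n k m :: nat
  assumes linear: "linear_code n C" and code_nonzero: "C \<noteq> {0}" and m_pos: "0 < m"
    and kappa_iso: "Fp_lin_iso p C \<kappa>"
begin

abbreviation Q where "Q \<equiv> code_space p n m k C \<kappa>"
abbreviation S where "S \<equiv> stabilizer_group p r (n * m) Q"
abbreviation Cent where "Cent \<equiv> centralizer (pauli p r (n * m)) S"
abbreviation SZ where "SZ \<equiv> {E \<circ> Z | E Z. E \<in> S \<and> Z \<in> scalar_elems p r (n * m)}"

definition code_tuples :: "(nat \<Rightarrow> 'a) set" where
  "code_tuples = {x \<in> vecs (n * m). \<forall>i<m. block n i x \<in> C}"

definition dual_tuples :: "(nat \<Rightarrow> 'a) set" where
  "dual_tuples = {d \<in> vecs (n * m). \<forall>i<m. block n i d \<in> dual_code n C}"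

definition block_sum :: "(nat \<Rightarrow> 'a) \<Rightarrow> nat \<Rightarrow> 'a" where
  "block_sum x = (\<lambda>j. \<Sum>i<m. block n i x j)"

definition diag_tuple :: "'b \<Rightarrow> nat \<Rightarrow> 'b" where
  "diag_tuple l = (\<lambda>i. if i < m then l else 0)"

definition Phi_scale :: complex where
  "Phi_scale = complex_of_real (real CARD('a) powr (- real k / 2)) ^ m"

lemma code_subspace: "fscale_space.subspace C"
  using linear_code_subspace[OF linear] .

lemma code_subset_vecs: "C \<subseteq> vecs n"
  using linear_code_subset_vecs[OF linear] .

lemma zero_in_code: "0 \<in> C"
  using fscale_space.subspace_0[OF code_subspace] .

lemma code_add: "x \<in> C \<Longrightarrow> y \<in> C \<Longrightarrow> x + y \<in> C"
  using fscale_space.subspace_add[OF code_subspace] .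

lemma code_diff: "x \<in> C \<Longrightarrow> y \<in> C \<Longrightarrow> x - y \<in> C"
  using fscale_space.subspace_diff[OF code_subspace] .

lemma code_scale: "x \<in> C \<Longrightarrow> fscale c x \<in> C"
  using fscale_space.subspace_scale[OF code_subspace] .

lemma code_sum: "(\<And>i. i \<in> A \<Longrightarrow> f i \<in> C) \<Longrightarrow> sum f A \<in> C"
  using fscale_space.subspace_sum[OF code_subspace] .

lemma block_sum_eq: "block_sum x = (\<Sum>i<m. block n i x)"
  unfolding block_sum_def by (simp add: fun_eq_iff sum_fun_apply)

lemma block_sum_diff: "block_sum (x - y) = block_sum x - block_sum y"
  unfolding block_sum_eq block_diff by (simp add: sum_subtractf)

lemma block_sum_zero [simp]: "block_sum 0 = 0"
  unfolding block_sum_eq by simp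

lemma block_sum_embed_block: "u \<in> vecs n \<Longrightarrow> i < m \<Longrightarrow> block_sum (embed_block n i u) = u"
  unfolding block_sum_eq by (simp add: block_embed_block if_distrib cong: if_cong)

lemma code_tuples_vecs: "x \<in> code_tuples \<Longrightarrow> x \<in> vecs (n * m)"
  unfolding code_tuples_def by simp

lemma code_tuples_block: "x \<in> code_tuples \<Longrightarrow> i < m \<Longrightarrow> block n i x \<in> C"
  unfolding code_tuples_def by simp

lemma zero_in_code_tuples: "0 \<in> code_tuples"
  unfolding code_tuples_def using zero_in_code by simp

lemma code_tuples_diff: "x \<in> code_tuples \<Longrightarrow> y \<in> code_tuples \<Longrightarrow> x - y \<in> code_tuples"
  unfolding code_tuples_def by (auto simp: block_diff intro: vecs_diff code_diff)

lemma code_tuples_add: "x \<in> code_tuples \<Longrightarrow> y \<in> code_tuples \<Longrightarrow> x + y \<in> code_tuples"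
  unfolding code_tuples_def by (auto simp: block_add intro: vecs_add code_add)

lemma embed_block_in_code_tuples: "u \<in> C \<Longrightarrow> i < m \<Longrightarrow> embed_block n i u \<in> code_tuples"
  unfolding code_tuples_def using code_subset_vecs zero_in_code
  by (auto simp: block_embed_block embed_block_in_vecs)

lemma block_sum_in_code: "x \<in> code_tuples \<Longrightarrow> block_sum x \<in> C"
  unfolding block_sum_eq by (rule code_sum) (simp add: code_tuples_block)

lemma dual_tuples_vecs: "d \<in> dual_tuples \<Longrightarrow> d \<in> vecs (n * m)"
  unfolding dual_tuples_def by simp

lemma zero_in_dual_tuples: "0 \<in> dual_tuples"
  unfolding dual_tuples_def by simp

lemma embed_block_in_dual_tuples:
  "u \<in> dual_code n C \<Longrightarrow> i < m \<Longrightarrow> embed_block n i u \<in> dual_tuples"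
  unfolding dual_tuples_def by (auto simp: dual_code_iff block_embed_block embed_block_in_vecs)

lemma vdot_dual_tuple_code_tuple: "d \<in> dual_tuples \<Longrightarrow> x \<in> code_tuples \<Longrightarrow> vdot (n * m) d x = 0"
  unfolding vdot_blocks dual_tuples_def by (simp add: dual_code_iff code_tuples_block)

lemma kappa_lin_functional: "\<kappa> l \<in> lin_functionals p C"
  using kappa_iso unfolding Fp_lin_iso_def bij_betw_def by blast

lemma kappa_less: "c \<in> C \<Longrightarrow> \<kappa> l c < p"
  using kappa_lin_functional unfolding lin_functionals_def by blast

lemma kappa_add: "c \<in> C \<Longrightarrow> c' \<in> C \<Longrightarrow> \<kappa> l (c + c') = (\<kappa> l c + \<kappa> l c') mod p"
  using kappa_lin_functional unfolding lin_functionals_def plus_fun_def by blast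

lemma kappa_zero_left: "c \<in> C \<Longrightarrow> \<kappa> 0 c = 0"
  using kappa_iso kappa_less unfolding Fp_lin_iso_def by (metis add_0 double_mod_eq_self_imp)

lemma kappa_zero_right: "\<kappa> l 0 = 0"
  using kappa_add[OF zero_in_code zero_in_code, of l] kappa_less[OF zero_in_code, of l]
  by (metis add_0 double_mod_eq_self_imp)

lemma kappa_separates: "s \<in> C \<Longrightarrow> (\<And>l. \<kappa> l s = 0) \<Longrightarrow> s = 0"
  using ex_lin_functional_nonzero[OF linear] kappa_iso
  unfolding Fp_lin_iso_def bij_betw_def by (metis imageE)

lemma prod_zeta_pow_kappa:
  "finite A \<Longrightarrow> (\<And>i. i \<in> A \<Longrightarrow> g i \<in> C)
    \<Longrightarrow> (\<Prod>i\<in>A. zeta p ^ \<kappa> l (g i)) = zeta p ^ \<kappa> l (\<Sum>i\<in>A. g i)"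
proof (induction A rule: finite_induct)
  case (insert i A)
  have "g i \<in> C" "sum g A \<in> C"
    using insert.prems by (auto intro: code_sum)
  have "(\<Prod>j\<in>insert i A. zeta p ^ \<kappa> l (g j)) = zeta p ^ \<kappa> l (g i) * zeta p ^ \<kappa> l (sum g A)"
    using insert by simp
  also have "\<dots> = zeta p ^ \<kappa> l (g i + sum g A)"
    by (simp only: kappa_add[OF \<open>g i \<in> C\<close> \<open>sum g A \<in> C\<close>] zeta_pow_add_mod)
  also have "g i + sum g A = sum g (insert i A)"
    using insert by simp
  finally show ?case .
qed (simp add: kappa_zero_right)

lemma Phi_diag_tuple:
  "Phi p n m k C \<kappa> (diag_tuple l) x
    = (if x \<in> code_tuples then Phi_scale * zeta p ^ \<kappa> l (block_sum x) else 0)"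
proof (cases "x \<in> code_tuples")
  case True
  then have "Phi p n m k C \<kappa> (diag_tuple l) x
      = (\<Prod>i<m. complex_of_real (real CARD('a) powr (- real k / 2)) * zeta p ^ \<kappa> l (block n i x))"
    unfolding Phi_def phi_def diag_tuple_def by (auto simp: code_tuples_def intro!: prod.cong)
  also have "\<dots> = Phi_scale * zeta p ^ \<kappa> l (block_sum x)"
    unfolding prod.distrib Phi_scale_def block_sum_eq
    using True prod_zeta_pow_kappa[of "{..<m}" "\<lambda>i. block n i x" l] by (simp add: code_tuples_block)
  finally show ?thesis
    using True by simp
next
  case False
  then have "x \<notin> vecs (n * m) \<or> (\<exists>i<m. block n i x \<notin> C)"
    unfolding code_tuples_def by auto
  then show ?thesis
    using False unfolding Phi_def phi_def diag_tuple_def by (auto intro: prod_zero)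
qed

lemma Phi_diag_tuple_zero:
  "Phi p n m k C \<kappa> (diag_tuple 0) x = (if x \<in> code_tuples then Phi_scale else 0)"
  unfolding Phi_diag_tuple using kappa_zero_left block_sum_in_code by simp

lemma Phi_scale_nonzero: "Phi_scale \<noteq> 0"
  unfolding Phi_scale_def by simp

lemma diag_eq_range: "diag m = range diag_tuple"
  unfolding diag_def diag_tuple_def by auto

lemma code_space_elem:
  assumes "\<psi> \<in> Q"
  obtains \<alpha> where "\<psi> = (\<lambda>x. \<Sum>l\<in>Phi p n m k C \<kappa> ` diag m. \<alpha> l * l x)"
  using assms unfolding code_space_def cspan_def by blast

lemma Phi_diag_tuple_in_code_space: "Phi p n m k C \<kappa> (diag_tuple l) \<in> Q"
proof -
  let ?G = "Phi p n m k C \<kappa> ` diag m" and ?v = "Phi p n m k C \<kappa> (diag_tuple l)"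
  have "finite ?G" "?v \<in> ?G"
    unfolding diag_eq_range by simp_all
  then have "?v = (\<lambda>x. \<Sum>w\<in>?G. (if w = ?v then 1 else 0) * w x)"
    by (simp add: if_distrib[of "\<lambda>c. c * _"] sum.delta cong: if_cong)
  then show ?thesis
    unfolding code_space_def cspan_def mem_Collect_eq by (rule exI[of _ "\<lambda>w. if w = ?v then 1 else 0"])
qed

lemma code_space_subset_states: "Q \<subseteq> states (n * m)"
proof
  fix \<psi> assume "\<psi> \<in> Q"
  then obtain \<alpha> where "\<psi> = (\<lambda>x. \<Sum>l\<in>Phi p n m k C \<kappa> ` diag m. \<alpha> l * l x)"
    by (rule code_space_elem)
  then show "\<psi> \<in> states (n * m)"
    unfolding states_def Phi_def by (auto intro!: sum.neutral)
qed

lemma dual_tuples_if_trace_orthogonal: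
  assumes b: "b \<in> vecs (n * m)" and orth: "\<And>x. x \<in> code_tuples \<Longrightarrow> ftrace p r (vdot (n * m) b x) = 0"
  shows "b \<in> dual_tuples"
proof -
  have "vdot n (block n i b) c = 0" if i: "i < m" and c: "c \<in> C" for i c
  proof (rule ftrace_nondegenerate)
    fix \<beta> :: 'a
    have "fscale \<beta> c \<in> C" "fscale \<beta> c \<in> vecs n"
      using c code_scale code_subset_vecs by auto
    then have "vdot (n * m) b (embed_block n i (fscale \<beta> c)) = \<beta> * vdot n (block n i b) c"
      "embed_block n i (fscale \<beta> c) \<in> code_tuples"
      using i by (simp_all add: vdot_embed_block_right vdot_scale_right embed_block_in_code_tuples)
    then show "ftrace p r (\<beta> * vdot n (block n i b) c) = 0"
      using orth by metis
  qed
  then show ?thesis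
    unfolding dual_tuples_def dual_code_iff using b block_in_vecs by blast
qed

lemma code_tuples_if_trace_orthogonal:
  assumes a: "a \<in> vecs (n * m)"
    and orth: "\<And>d. d \<in> dual_tuples \<Longrightarrow> ftrace p r (vdot (n * m) d a) = 0"
  shows "a \<in> code_tuples"
  unfolding code_tuples_def
proof (intro CollectI conjI allI impI a)
  fix i assume i: "i < m"
  show "block n i a \<in> C"
  proof (rule mem_code_if_orthogonal_to_dual[OF linear block_in_vecs])
    fix d' assume d': "d' \<in> dual_code n C"
    show "vdot n d' (block n i a) = 0"
    proof (rule ftrace_nondegenerate)
      fix \<beta> :: 'a
      let ?d = "embed_block n i (fscale \<beta> d')"
      have dual: "fscale \<beta> d' \<in> dual_code n C"
        using dual_code_scale[OF d'] .
      then have vecs: "fscale \<beta> d' \<in> vecs n"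
        by (simp add: dual_code_iff)
      have "ftrace p r (vdot (n * m) ?d a) = 0"
        using i dual by (intro orth embed_block_in_dual_tuples)
      then show "ftrace p r (\<beta> * vdot n d' (block n i a)) = 0"
        using i by (simp add: vdot_embed_block_left[OF vecs] vdot_scale_left)
    qed
  qed
qed

subsection \<open>The stabilizer group\<close>

lemma scalar_on_code_space_imp:
  assumes w: "w \<noteq> 0" and a: "a \<in> vecs (n * m)" and b: "b \<in> vecs (n * m)"
    and scalar: "\<And>\<psi>. \<psi> \<in> Q \<Longrightarrow> err_op p r (n * m) w a b \<psi> = (\<lambda>x. u * \<psi> x)"
  shows "a \<in> code_tuples \<and> block_sum a = 0 \<and> b \<in> dual_tuples \<and> w = u"
proof -
  let ?E = "err_op p r (n * m) w a b" and ?\<Phi> = "\<lambda>l. Phi p n m k C \<kappa> (diag_tuple l)"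
  have E_Phi: "?E (?\<Phi> l) y = u * ?\<Phi> l y" for l y
    using scalar[OF Phi_diag_tuple_in_code_space] by metis
  have "u * ?\<Phi> 0 a = w * Phi_scale"
    using E_Phi[of 0 a] a zero_in_code_tuples by (simp add: err_op_apply Phi_diag_tuple_zero)
  with w Phi_scale_nonzero have a_tuple: "a \<in> code_tuples" and "w = u"
    by (simp_all add: Phi_diag_tuple_zero split: if_splits)
  have "ftrace p r (vdot (n * m) b x) = 0" if x: "x \<in> code_tuples" for x
  proof -
    have "a + x \<in> code_tuples" "(a + x) - a = x"
      using code_tuples_add[OF a_tuple x] by simp_all
    then have "w * trace_char (vdot (n * m) b x) * Phi_scale = w * Phi_scale"
      using E_Phi[of 0 "a + x"] x \<open>w = u\<close> code_tuples_vecs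
      by (simp add: err_op_apply Phi_diag_tuple_zero)
    then show ?thesis
      using w Phi_scale_nonzero by (simp add: trace_char_eq_1_iff[symmetric])
  qed
  then have dual: "b \<in> dual_tuples"
    by (rule dual_tuples_if_trace_orthogonal[OF b])
  have "\<kappa> l (block_sum a) = 0" for l
  proof -
    have "w * Phi_scale = w * (Phi_scale * zeta p ^ \<kappa> l (block_sum a))"
      using E_Phi[of l a] a a_tuple zero_in_code_tuples \<open>w = u\<close>
      by (simp add: err_op_apply Phi_diag_tuple kappa_zero_right block_sum_eq)
    then have "zeta p ^ \<kappa> l (block_sum a) = 1"
      using w Phi_scale_nonzero by simp
    then show ?thesis
      using zeta_pow_eq_1_iff[OF kappa_less[OF block_sum_in_code[OF a_tuple]]] by simp
  qed
  then have "block_sum a = 0"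
    using kappa_separates block_sum_in_code[OF a_tuple] by blast
  with a_tuple dual \<open>w = u\<close> show ?thesis
    by blast
qed

lemma err_op_fixes_code_space:
  assumes a: "a \<in> code_tuples" "block_sum a = 0" and b: "b \<in> dual_tuples" and \<psi>: "\<psi> \<in> Q"
  shows "err_op p r (n * m) 1 a b \<psi> = \<psi>"
proof -
  let ?E = "err_op p r (n * m) 1 a b"
  have "?E (Phi p n m k C \<kappa> (diag_tuple l)) y = Phi p n m k C \<kappa> (diag_tuple l) y" for l y
  proof (cases "y \<in> vecs (n * m)")
    case True
    have "y - a \<in> code_tuples \<longleftrightarrow> y \<in> code_tuples"
      using code_tuples_diff[of y a] code_tuples_add[of "y - a" a] a(1) by auto
    moreover have "block_sum (y - a) = block_sum y"
      using a(2) by (simp add: block_sum_diff)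
    ultimately show ?thesis
      using True vdot_dual_tuple_code_tuple[OF b] by (simp add: err_op_apply Phi_diag_tuple)
  qed (simp add: err_op_outside Phi_def)
  moreover obtain \<alpha> where "\<psi> = (\<lambda>x. \<Sum>l\<in>Phi p n m k C \<kappa> ` diag m. \<alpha> l * l x)"
    using \<psi> by (rule code_space_elem)
  ultimately show ?thesis
    by (intro ext) (auto simp: err_op_lincomb diag_eq_range intro!: sum.cong)
qed

lemma stabilizer_group_iff:
  "E \<in> S \<longleftrightarrow> (\<exists>a b. E = err_op p r (n * m) 1 a b \<and> a \<in> code_tuples \<and> block_sum a = 0 \<and> b \<in> dual_tuples)"
proof
  assume "E \<in> S"
  then obtain w a b where E: "E = err_op p r (n * m) w a b" "w \<in> omega_pows p"
    "a \<in> vecs (n * m)" "b \<in> vecs (n * m)" "\<And>\<psi>. \<psi> \<in> Q \<Longrightarrow> E \<psi> = \<psi>"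
    unfolding stabilizer_group_def pauli_def by blast
  then have "a \<in> code_tuples \<and> block_sum a = 0 \<and> b \<in> dual_tuples \<and> w = 1"
    by (intro scalar_on_code_space_imp omega_pows_nonzero) auto
  with E show "\<exists>a b. E = err_op p r (n * m) 1 a b \<and> a \<in> code_tuples \<and> block_sum a = 0 \<and> b \<in> dual_tuples"
    by blast
next
  assume "\<exists>a b. E = err_op p r (n * m) 1 a b \<and> a \<in> code_tuples \<and> block_sum a = 0 \<and> b \<in> dual_tuples"
  then show "E \<in> S"
    unfolding stabilizer_group_def pauli_def
    using omega_pows_one code_tuples_vecs dual_tuples_vecs err_op_fixes_code_space
    by blast
qed

lemma err_op_in_SZ_iff:
  assumes w: "w \<in> omega_pows p" and a: "a \<in> vecs (n * m)" and b: "b \<in> vecs (n * m)"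
  shows "err_op p r (n * m) w a b \<in> SZ
    \<longleftrightarrow> a \<in> code_tuples \<and> block_sum a = 0 \<and> b \<in> dual_tuples"
proof
  assume "err_op p r (n * m) w a b \<in> SZ"
  then obtain E Z u where EZ: "err_op p r (n * m) w a b = E \<circ> Z" "E \<in> S"
    and Z: "\<And>\<psi>. \<psi> \<in> states (n * m) \<Longrightarrow> Z \<psi> = (\<lambda>x. u * \<psi> x)"
    unfolding scalar_elems_def by blast
  obtain c d where E: "E = err_op p r (n * m) 1 c d"
    using EZ(2) stabilizer_group_iff by blast
  have "err_op p r (n * m) w a b \<psi> = (\<lambda>x. u * \<psi> x)" if "\<psi> \<in> Q" for \<psi>
  proof -
    have "err_op p r (n * m) w a b \<psi> = (\<lambda>y. u * E \<psi> y)"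
      using EZ(1) Z code_space_subset_states that by (auto simp: E err_op_mult)
    also have "E \<psi> = \<psi>"
      using EZ(2) that unfolding stabilizer_group_def by blast
    finally show ?thesis .
  qed
  then show "a \<in> code_tuples \<and> block_sum a = 0 \<and> b \<in> dual_tuples"
    using scalar_on_code_space_imp[OF omega_pows_nonzero[OF w] a b] by blast
next
  assume "a \<in> code_tuples \<and> block_sum a = 0 \<and> b \<in> dual_tuples"
  then have "err_op p r (n * m) 1 a b \<in> S"
    using stabilizer_group_iff by blast
  moreover have "err_op p r (n * m) w a b = err_op p r (n * m) 1 a b \<circ> err_op p r (n * m) w 0 0"
    using err_op_comp_scalar[OF a] by simp
  ultimately show "err_op p r (n * m) w a b \<in> SZ"
    using err_op_scalar_in_scalar_elems[OF w] by blast
qed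

subsection \<open>The centralizer of the stabilizer\<close>

lemma err_op_in_centralizer_iff:
  assumes w: "w \<in> omega_pows p" and a: "a \<in> vecs (n * m)" and b: "b \<in> vecs (n * m)"
  shows "err_op p r (n * m) w a b \<in> Cent \<longleftrightarrow>
    (\<forall>c d. c \<in> code_tuples \<longrightarrow> block_sum c = 0 \<longrightarrow> d \<in> dual_tuples
      \<longrightarrow> ftrace p r (vdot (n * m) d a - vdot (n * m) b c) = 0)"
proof -
  have "err_op p r (n * m) w a b \<in> pauli p r (n * m)"
    unfolding pauli_def using w a b by blast
  moreover have comm: "err_op p r (n * m) w a b \<circ> err_op p r (n * m) 1 c d
      = err_op p r (n * m) 1 c d \<circ> err_op p r (n * m) w a b
    \<longleftrightarrow> ftrace p r (vdot (n * m) d a - vdot (n * m) b c) = 0" if "c \<in> code_tuples" for c d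
    by (rule err_op_commute_iff) (simp_all add: a code_tuples_vecs[OF that] omega_pows_nonzero[OF w])
  ultimately show ?thesis
  proof (intro iffI allI impI)
    fix c d
    assume "err_op p r (n * m) w a b \<in> Cent" and c: "c \<in> code_tuples" "block_sum c = 0"
      and "d \<in> dual_tuples"
    then have "err_op p r (n * m) 1 c d \<in> S" "err_op p r (n * m) w a b \<in> Cent"
      unfolding stabilizer_group_iff by blast+
    then have "err_op p r (n * m) w a b \<circ> err_op p r (n * m) 1 c d
        = err_op p r (n * m) 1 c d \<circ> err_op p r (n * m) w a b"
      unfolding centralizer_def by blast
    with comm[OF c(1)] show "ftrace p r (vdot (n * m) d a - vdot (n * m) b c) = 0"
      by simp
  qed (auto simp: centralizer_def Ball_def stabilizer_group_iff)
qed

lemma centralizer_trace_orthogonal: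
  assumes "err_op p r (n * m) w a b \<in> Cent" "w \<in> omega_pows p" "a \<in> vecs (n * m)" "b \<in> vecs (n * m)"
    and "c \<in> code_tuples" "block_sum c = 0" "d \<in> dual_tuples"
  shows "ftrace p r (vdot (n * m) d a - vdot (n * m) b c) = 0"
  using assms err_op_in_centralizer_iff by blast

lemma centralizer_imp_code_tuples:
  assumes "err_op p r (n * m) w a b \<in> Cent" "w \<in> omega_pows p" "a \<in> vecs (n * m)" "b \<in> vecs (n * m)"
  shows "a \<in> code_tuples"
proof (rule code_tuples_if_trace_orthogonal[OF assms(3)])
  fix d assume "d \<in> dual_tuples"
  then show "ftrace p r (vdot (n * m) d a) = 0"
    using centralizer_trace_orthogonal[OF assms zero_in_code_tuples] by simp
qed

lemma centralizer_imp_dual_blocks: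
  assumes E: "err_op p r (n * m) w a b \<in> Cent" "w \<in> omega_pows p" "a \<in> vecs (n * m)" "b \<in> vecs (n * m)"
    and i: "i < m" "i' < m" and dual: "block n i b \<in> dual_code n C"
  shows "block n i' b \<in> dual_code n C"
  unfolding dual_code_iff
proof (intro conjI ballI block_in_vecs)
  fix u assume u: "u \<in> C"
  have "vdot n (block n i' b) u - vdot n (block n i b) u = 0"
  proof (rule ftrace_nondegenerate)
    fix \<beta> :: 'a
    have \<beta>u: "fscale \<beta> u \<in> C" "fscale \<beta> u \<in> vecs n"
      using code_scale[OF u] code_subset_vecs by auto
    let ?c = "embed_block n i' (fscale \<beta> u) - embed_block n i (fscale \<beta> u)"
    have "?c \<in> code_tuples" "block_sum ?c = 0"
      using i \<beta>u by (simp_all add: code_tuples_diff embed_block_in_code_tuples block_sum_diff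
          block_sum_embed_block)
    then have "ftrace p r (vdot (n * m) 0 a - vdot (n * m) b ?c) = 0"
      by (intro centralizer_trace_orthogonal[OF E] zero_in_dual_tuples)
    moreover have "vdot (n * m) b ?c = \<beta> * (vdot n (block n i' b) u - vdot n (block n i b) u)"
      using i \<beta>u by (simp add: vdot_diff_right vdot_embed_block_right vdot_scale_right right_diff_distrib)
    ultimately show "ftrace p r (\<beta> * (vdot n (block n i' b) u - vdot n (block n i b) u)) = 0"
      using ftrace_add[of "vdot (n * m) b ?c" "- vdot (n * m) b ?c"] by simp
  qed
  then show "vdot n (block n i' b) u = 0"
    using dual u by (simp add: dual_code_iff)
qed

subsection \<open>The minimum distance\<close>

lemma min_le_xz_weight:
  assumes E: "err_op p r (n * m) w a b \<in> Cent - SZ"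
    and w: "w \<in> omega_pows p" and a: "a \<in> vecs (n * m)" and b: "b \<in> vecs (n * m)"
  shows "min (min_dist n C) m \<le> xz_weight (n * m) a b"
proof -
  have cent: "err_op p r (n * m) w a b \<in> Cent"
    using E by blast
  have a_tuple: "a \<in> code_tuples"
    using centralizer_imp_code_tuples[OF cent w a b] .
  with E err_op_in_SZ_iff[OF w a b] b
  consider "block_sum a \<noteq> 0" | i0 where "i0 < m" "block n i0 b \<notin> dual_code n C"
    unfolding dual_tuples_def by blast
  then show ?thesis
  proof cases
    case 1
    then obtain i where i: "i < m" "block n i a \<noteq> 0"
      unfolding block_sum_eq by (metis lessThan_iff sum.neutral)
    then have "min_dist n C \<le> hamming_wt n (block n i a)"
      using min_dist_le code_tuples_block[OF a_tuple] by blast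
    also have "\<dots> \<le> xz_weight (n * m) a b"
      using hamming_wt_block_le_xz_weight[OF i(1)] .
    finally show ?thesis
      by simp
  next
    case 2
    have "block n i b \<noteq> 0" if "i < m" for i
      using centralizer_imp_dual_blocks[OF cent w a b that 2(1)] 2(2) zero_in_dual_code by metis
    then have "m \<le> xz_weight (n * m) a b"
      by (rule xz_weight_ge_if_blocks_nonzero)
    then show ?thesis
      by simp
  qed
qed

lemma min_le_err_wt:
  assumes "E \<in> Cent - SZ"
  shows "min (min_dist n C) m \<le> err_wt p r (n * m) E"
proof -
  have "E \<in> pauli p r (n * m)"
    using assms unfolding centralizer_def by blast
  then obtain w a b where "w \<in> omega_pows p" "a \<in> vecs (n * m)" "b \<in> vecs (n * m)"
    "E = err_op p r (n * m) w a b" "err_wt p r (n * m) E = xz_weight (n * m) a b"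
    by (rule err_wt_attained)
  with assms show ?thesis
    using min_le_xz_weight by simp
qed

lemma ex_err_wt_le_min_dist: "\<exists>E\<in>Cent - SZ. err_wt p r (n * m) E \<le> min_dist n C"
proof -
  obtain c0 where "c0 \<in> C" "c0 \<noteq> 0"
    using code_nonzero zero_in_code by blast
  then obtain c where c: "c \<in> C" "c \<noteq> 0" "hamming_wt n c = min_dist n C"
    by (rule min_dist_attained)
  have c_vecs: "c \<in> vecs n"
    using c(1) code_subset_vecs by blast
  let ?a = "embed_block n 0 c"
  have a: "?a \<in> vecs (n * m)"
    using embed_block_in_vecs[OF m_pos] .
  have "vdot (n * m) d ?a = 0" if "d \<in> dual_tuples" for d
    using that m_pos c(1) by (simp add: vdot_embed_block_right[OF c_vecs] dual_code_iff dual_tuples_def)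
  then have "err_op p r (n * m) 1 ?a 0 \<in> Cent"
    by (simp add: err_op_in_centralizer_iff[OF omega_pows_one a zero_in_vecs])
  moreover have "err_op p r (n * m) 1 ?a 0 \<notin> SZ"
    using err_op_in_SZ_iff[OF omega_pows_one a zero_in_vecs] block_sum_embed_block[OF c_vecs m_pos] c(2)
    by simp
  moreover have "err_wt p r (n * m) (err_op p r (n * m) 1 ?a 0) \<le> min_dist n C"
    using order_trans[OF err_wt_le[OF omega_pows_one a zero_in_vecs, where r = r] xz_weight_embed_block_le] c(3)
    by simp
  ultimately show ?thesis
    by blast
qed

lemma ex_err_wt_le_m: "\<exists>E\<in>Cent - SZ. err_wt p r (n * m) E \<le> m"
proof -
  obtain c where c: "c \<in> C" "c \<noteq> 0"
    using code_nonzero zero_in_code by blast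
  then obtain j where j: "c j \<noteq> 0"
    by (auto simp: fun_eq_iff)
  have "c \<in> vecs n"
    using c(1) code_subset_vecs by blast
  with j have "j < n"
    unfolding vecs_def by (cases "j < n") auto
  let ?e = "unit_vec j :: nat \<Rightarrow> 'a"
  have e: "?e \<in> vecs n" "hamming_wt n ?e = 1" and e_dot: "vdot n ?e y = y j" for y
    using \<open>j < n\<close> by (simp_all add: unit_vec_in_vecs hamming_wt_unit_vec vdot_unit_vec_left)
  let ?b = "repeat_block n m ?e"
  have b: "?b \<in> vecs (n * m)"
    by (rule repeat_block_in_vecs)
  have "vdot (n * m) ?b x = (\<Sum>i<m. vdot n ?e (block n i x))" for x
    unfolding vdot_blocks using block_repeat_block[OF e(1)] by (intro sum.cong) simp_all
  also have "\<dots> x = block_sum x j" for x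
    unfolding block_sum_def e_dot by simp
  finally have "vdot (n * m) ?b x = block_sum x j" for x .
  then have "err_op p r (n * m) 1 0 ?b \<in> Cent"
    by (simp add: err_op_in_centralizer_iff[OF omega_pows_one zero_in_vecs b])
  moreover have "block n 0 ?b \<notin> dual_code n C"
  proof
    assume "block n 0 ?b \<in> dual_code n C"
    then have "vdot n ?e c = 0"
      using c(1) block_repeat_block[OF e(1) m_pos] by (simp add: dual_code_iff)
    with j show False
      by (simp add: e_dot)
  qed
  then have "err_op p r (n * m) 1 0 ?b \<notin> SZ"
    using err_op_in_SZ_iff[OF omega_pows_one zero_in_vecs b] m_pos unfolding dual_tuples_def by blast
  moreover have "err_wt p r (n * m) (err_op p r (n * m) 1 0 ?b) \<le> m"
    using order_trans[OF err_wt_le[OF omega_pows_one zero_in_vecs b, where r = r] xz_weight_repeat_block_le] e(2)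
    by simp
  ultimately show ?thesis
    by blast
qed

lemma ex_err_wt_le_min: "\<exists>E\<in>Cent - SZ. err_wt p r (n * m) E \<le> min (min_dist n C) m"
proof (cases "min_dist n C \<le> m")
  case True
  then have min_eq: "min (min_dist n C) m = min_dist n C"
    by simp
  show ?thesis
    unfolding min_eq by (rule ex_err_wt_le_min_dist)
next
  case False
  then have min_eq: "min (min_dist n C) m = m"
    by simp
  show ?thesis
    unfolding min_eq by (rule ex_err_wt_le_m)
qed

theorem qdist_eq: "qdist p r (n * m) Q = min (min_dist n C) m"
  unfolding qdist_def
proof (rule Min_eqI)
  show "finite (err_wt p r (n * m) ` (Cent - SZ))"
    by (rule finite_err_wt_image) (auto simp: centralizer_def)
  show "min (min_dist n C) m \<le> t" if "t \<in> err_wt p r (n * m) ` (Cent - SZ)" for t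
    using that min_le_err_wt by blast
  obtain E where E: "E \<in> Cent - SZ" "err_wt p r (n * m) E \<le> min (min_dist n C) m"
    using ex_err_wt_le_min by blast
  then have "err_wt p r (n * m) E = min (min_dist n C) m"
    using min_le_err_wt[OF E(1)] by (intro le_antisym)
  with E(1) show "min (min_dist n C) m \<in> err_wt p r (n * m) ` (Cent - SZ)"
    by (intro image_eqI[of _ _ E]) simp_all
qed

end

theorem corollary3p5:
  fixes C :: "(nat \<Rightarrow> 'a::{finite,field}) set"
    and \<kappa> :: "'b::{finite,field} \<Rightarrow> (nat \<Rightarrow> 'a) \<Rightarrow> nat"
    and p r n k m :: nat
  assumes "prime p" and "r \<ge> 1" and "CARD('a) = p ^ r"
    and "linear_code n C" and "code_dim C = k" and "1 \<le> k" and "k < n"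
    and "m \<ge> 2"
    and "CARD('b) = CARD('a) ^ k"
    and "Fp_lin_iso p C \<kappa>"
  shows "qdist p r (n * m) (code_space p n m k C \<kappa>) = min (min_dist n C) m
    \<and> stabilizer_group p r (n * m) (code_space p n m k C \<kappa>)
        = {err_op p r (n * m) 1 a b | a b. a \<in> vecs (n * m) \<and> b \<in> vecs (n * m)
            \<and> (\<forall>i<m. block n i a \<in> C \<and> block n i b \<in> dual_code n C)
            \<and> (\<lambda>j. \<Sum>i<m. block n i a j) = (\<lambda>j. 0)}"
proof -
  interpret diagonal_code p r C \<kappa> n k m
    using assms code_nonzero_if_dim_pos[of C] by unfold_locales auto
  have "stabilizer_group p r (n * m) (code_space p n m k C \<kappa>)
      = {err_op p r (n * m) 1 a b | a b. a \<in> vecs (n * m) \<and> b \<in> vecs (n * m)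
          \<and> (\<forall>i<m. block n i a \<in> C \<and> block n i b \<in> dual_code n C)
          \<and> (\<lambda>j. \<Sum>i<m. block n i a j) = (\<lambda>j. 0)}"
    unfolding set_eq_iff stabilizer_group_iff code_tuples_def dual_tuples_def block_sum_def zero_fun_def
    by blast
  with qdist_eq show ?thesis
    by simp
qed

end
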